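(* For $(c,d)\in\mathbb{C}\times\mathbb{C}^*$ let $f_{c,d}(z) = 1 + \frac cz + \frac d{z^2}$, with critical points $0$ and $-2d/c$ ($=\infty$ when $c=0$), and identify $(c,d)$ with $[c:d:1]\in\mathbb{CP}^2$. For $j\ge 1$ let $\mathcal{P}_j = \{(c,d)\in\mathbb{C}\times\mathbb{C}^* : f_{c,d}^j(0) = -2d/c\}$ and $\mathcal{Q}_j = \{(c,d)\in\mathbb{C}\times\mathbb{C}^* : f_{c,d}^j(-2d/c) = 0\}$, with closures $\overline{\mathcal{P}_j}$, $\overline{\mathcal{Q}_j}$ in $\mathbb{CP}^2$. If $[c:0:1]\in\overline{\mathcal{P}_j}\cup\overline{\mathcal{Q}_j}$, then either $c=0$, or there are integers $q\ge 3$ and $p$ with $\gcd(p,q)=1$ such that $c^{-1} = -4\cos^2(\pi p/q)$. *)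

theory Defs
  imports "HOL-Analysis.Analysis"
begin

text \<open>Points of the Riemann sphere are represented as complex option, with None the point at infinity.\<close>

definition fcd :: "complex \<Rightarrow> complex \<Rightarrow> complex option \<Rightarrow> complex option" where
  "fcd c d w = (case w of
      None \<Rightarrow> Some 1
    | Some z \<Rightarrow> (if z = 0 then None else Some (1 + c / z + d / z^2)))"

definition crit :: "complex \<Rightarrow> complex \<Rightarrow> complex option" where
  "crit c d = (if c = 0 then None else Some (- 2 * d / c))"

definition Pset :: "nat \<Rightarrow> (complex \<times> complex) set" where
  "Pset j = {(c, d). d \<noteq> 0 \<and> (fcd c d ^^ j) (Some 0) = crit c d}"

definition Qset :: "nat \<Rightarrow> (complex \<times> complex) set" where
  "Qset j = {(c, d). d \<noteq> 0 \<and> (fcd c d ^^ j) (crit c d) = Some 0}"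

end

theory Submission
  imports Defs
begin

text \<open>Let (c_n, d_n) in P_j (or Q_j) tend to (c, 0) with c \<noteq> 0. In both cases the first
  relevant iterate tends to \<infinity> = f_{c,0}(0): for P_j it is f(0) = \<infinity> itself, for Q_j it is the
  critical value 1 - c_n^2 / (4 d_n). Since (c, d, z) \<mapsto> f_{c,d}(z) is continuous on the Riemann
  sphere away from z = 0, the later iterates follow the orbit of 0 under f_{c,0}(z) = 1 + c/z as
  long as that orbit avoids 0; the j-th iterates tend to 0, so this orbit returns to 0 within
  j steps. Its points are the ratios a_{m+1} / a_m of the sequence a_{n+2} = a_{n+1} + c a_n,
  so some a_i = 0, i.e. (l_1/l_2)^i = 1 for the roots l_1, l_2 of x^2 = x + c. Being neither 1
  nor -1, l_1/l_2 = cis(2 \<pi> p/q) with q \<ge> 3, and -1/c = (l_1 + l_2)^2/(l_1 l_2) = 4 cos^2(\<pi> p/q).\<close>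

text \<open>f_{c,0}(z) = (z + c)/z is the Moebius map of the matrix ((1, c), (1, 0)), whose powers
  have the entries fibc c n.\<close>

fun fibc :: "complex \<Rightarrow> nat \<Rightarrow> complex" where
  "fibc c 0 = 0"
| "fibc c (Suc 0) = 1"
| "fibc c (Suc (Suc n)) = fibc c (Suc n) + c * fibc c n"

lemma fibc_minus_quarter: "2 ^ n * fibc (- 1/4) n = 2 * of_nat n"
proof (induction "- 1/4 :: complex" n rule: fibc.induct)
  case (3 n)
  have "2 ^ Suc (Suc n) * fibc (- 1/4) (Suc (Suc n))
      = 2 * (2 ^ Suc n * fibc (- 1/4) (Suc n)) - 2 ^ n * fibc (- 1/4) n"
    by (simp add: algebra_simps)
  with 3 show ?case by (simp add: algebra_simps)
qed simp_all

lemma fibc_binet: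
  assumes "l1 + l2 = 1" "l1 * l2 = - c"
  shows "(l1 - l2) * fibc c n = l1 ^ n - l2 ^ n"
  using assms
proof (induction c n rule: fibc.induct)
  case (3 c n)
  have "(l1 - l2) * fibc c (Suc (Suc n))
      = (l1 - l2) * fibc c (Suc n) + c * ((l1 - l2) * fibc c n)"
    by (simp add: algebra_simps)
  also have "\<dots> = (l1 ^ Suc n - l2 ^ Suc n) + c * (l1 ^ n - l2 ^ n)"
    using 3 by simp
  also have "\<dots> = (l1 + l2) * (l1 ^ Suc n - l2 ^ Suc n) - l1 * l2 * (l1 ^ n - l2 ^ n)"
    using "3.prems" by simp
  also have "\<dots> = l1 ^ Suc (Suc n) - l2 ^ Suc (Suc n)"
    by (simp add: algebra_simps)
  finally show ?case .
qed simp_all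

lemma fibc_consecutive_nonzero:
  "c \<noteq> 0 \<Longrightarrow> fibc c n \<noteq> 0 \<or> fibc c (Suc n) \<noteq> 0"
  by (induction n) auto

lemma root_of_unity_cis_coprime:
  assumes "w ^ N = 1" "N \<ge> 1"
  obtains p q :: int where "q > 0" "gcd p q = 1" "w = cis (2 * pi * p / q)"
proof -
  obtain k where w: "w = cis (2 * pi * real k / real N)"
    using Complex.bij_betw_roots_unity[of N] assms unfolding bij_betw_def by auto
  define g where "g = gcd (int k) (int N)"
  define p where "p = int k div g"
  define q where "q = int N div g"
  have g: "g > 0" and k: "int k = p * g" and N: "int N = q * g"
    using assms(2) by (simp_all add: g_def p_def q_def)
  have "q > 0"
    using assms(2) g N by (metis of_nat_0_less_iff zero_less_mult_pos2 less_le_trans zero_less_one)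
  moreover have "w = cis (2 * pi * p / q)"
  proof -
    have "real k = p * g" "real N = q * g"
      using k N by (metis of_int_mult of_int_of_nat_eq)+
    with g have "real k / real N = p / q"
      by simp
    then show ?thesis
      using w by (metis times_divide_eq_right)
  qed
  moreover have "gcd p q = 1"
    using div_gcd_coprime[of "int k" "int N"] assms(2) by (simp add: p_def q_def g_def)
  ultimately show thesis
    by (metis that)
qed

lemma root_of_unity_cis_order_ge_3:
  assumes "w ^ N = 1" "N \<ge> 1" "w \<noteq> 1" "w \<noteq> -1"
  obtains p q :: int where "q \<ge> 3" "gcd p q = 1" "w = cis (2 * pi * p / q)"
proof -
  obtain p q :: int where q: "q > 0" "gcd p q = 1" and w: "w = cis (2 * pi * p / q)"
    using root_of_unity_cis_coprime assms(1,2) .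
  have "w ^ nat q = cis (real (nat q) * (2 * pi * p / q))"
    unfolding w by (rule Complex.DeMoivre)
  also have "real (nat q) * (2 * pi * p / q) = 2 * pi * p"
    using q by simp
  finally have wq: "w ^ nat q = 1"
    by simp
  have "q \<noteq> 1"
    using wq assms(3) by auto
  moreover have "q \<noteq> 2"
  proof
    assume "q = 2"
    then have "(w - 1) * (w + 1) = 0"
      using wq by (simp add: algebra_simps power2_eq_square)
    with assms(3,4) show False
      by (simp add: add_eq_0_iff2)
  qed
  ultimately have "q \<ge> 3"
    using q(1) by linarith
  then show thesis
    using q(2) w by (rule that)
qed

lemma cis_double_add_inverse:
  "cis (2 * x) + 2 + inverse (cis (2 * x)) = of_real (4 * cos x ^ 2)"
  by (simp add: complex_eq_iff cos_double_cos)

lemma fibc_zero_imp_root_of_unity: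
  assumes "c \<noteq> 0" "N \<ge> 1" "fibc c N = 0"
  obtains w where "w ^ N = 1" "w \<noteq> 1" "w \<noteq> -1" "inverse c = - (w + 2 + inverse w)"
proof -
  \<comment> \<open>the roots of x^2 = x + c; they coincide only for c = -1/4, where fibc has no zero\<close>
  define s where "s = csqrt (1 + 4 * c)"
  define l1 where "l1 = (1 + s) / 2"
  define l2 where "l2 = (1 - s) / 2"
  have s2: "s ^ 2 = 1 + 4 * c"
    by (simp add: s_def)
  have sum: "l1 + l2 = 1" and diff: "l1 - l2 = s"
    by (simp_all add: l1_def l2_def field_simps)
  have prod: "l1 * l2 = - c"
    using s2 by (simp add: l1_def l2_def field_simps power2_eq_square)
  then have "l1 \<noteq> 0" "l2 \<noteq> 0"
    using assms(1) by auto
  have "s \<noteq> 0"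
  proof
    assume "s = 0"
    then have "c = - 1/4"
      using s2 by (simp add: field_simps eq_neg_iff_add_eq_0 add.commute)
    with fibc_minus_quarter[of N] assms(2,3) show False
      by simp
  qed
  show thesis
  proof (rule that[of "l1 / l2"])
    show "(l1 / l2) ^ N = 1"
      using fibc_binet[OF sum prod, of N] assms(3) \<open>l2 \<noteq> 0\<close> by (simp add: power_divide)
    show "l1 / l2 \<noteq> 1"
      using \<open>s \<noteq> 0\<close> \<open>l2 \<noteq> 0\<close> diff by auto
    show "l1 / l2 \<noteq> -1"
      using sum \<open>l2 \<noteq> 0\<close> by (auto simp: field_simps)
    have "l1 / l2 + 2 + inverse (l1 / l2) = (l1 + l2) ^ 2 / (l1 * l2)"
      using \<open>l1 \<noteq> 0\<close> \<open>l2 \<noteq> 0\<close> by (simp add: field_simps power2_eq_square)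
    then show "inverse c = - (l1 / l2 + 2 + inverse (l1 / l2))"
      by (simp add: sum prod divide_inverse)
  qed
qed

lemma fibc_zero_imp_inverse_cos:
  assumes "c \<noteq> 0" "N \<ge> 1" "fibc c N = 0"
  obtains p q :: int where "q \<ge> 3" "gcd p q = 1"
    "inverse c = complex_of_real (- 4 * (cos (pi * p / q))^2)"
proof -
  obtain w where w: "w ^ N = 1" "w \<noteq> 1" "w \<noteq> -1" and c: "inverse c = - (w + 2 + inverse w)"
    using fibc_zero_imp_root_of_unity assms .
  obtain p q :: int where "q \<ge> 3" "gcd p q = 1" and w_cis: "w = cis (2 * pi * p / q)"
    using root_of_unity_cis_order_ge_3[OF w(1) assms(2) w(2,3)] by metis
  have "w + 2 + inverse w = of_real (4 * cos (pi * p / q) ^ 2)"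
    using cis_double_add_inverse[of "pi * p / q"] by (simp add: w_cis mult.assoc)
  with c show thesis
    using that \<open>q \<ge> 3\<close> \<open>gcd p q = 1\<close> by simp
qed

text \<open>Convergence in the Riemann sphere, through the chart z \<mapsto> 1/z near \<infinity>. That chart sends
  Some 0 to inverse 0 = 0 as well, hence the extra condition u n \<noteq> Some 0.\<close>

definition sphere_tendsto :: "(nat \<Rightarrow> complex option) \<Rightarrow> complex option \<Rightarrow> bool" where
  "sphere_tendsto u w \<longleftrightarrow> (case w of
      None \<Rightarrow> eventually (\<lambda>n. u n \<noteq> Some 0) sequentially \<and>
              (\<lambda>n. case_option 0 inverse (u n)) \<longlonglongrightarrow> 0
    | Some a \<Rightarrow> eventually (\<lambda>n. u n \<noteq> None) sequentially \<and> (\<lambda>n. the (u n)) \<longlonglongrightarrow> a)"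

lemma sphere_tendsto_SomeI:
  assumes "eventually (\<lambda>n. u n = Some (F n)) sequentially" "F \<longlonglongrightarrow> a"
  shows "sphere_tendsto u (Some a)"
proof -
  have "eventually (\<lambda>n. F n = the (u n)) sequentially"
    using assms(1) by eventually_elim simp
  then have "(\<lambda>n. the (u n)) \<longlonglongrightarrow> a"
    by (rule Lim_transform_eventually[OF assms(2)])
  with assms(1) show ?thesis
    unfolding sphere_tendsto_def by (auto elim: eventually_mono)
qed

lemma sphere_tendsto_NoneI:
  assumes "eventually (\<lambda>n. u n = Some (F n) \<and> F n \<noteq> 0) sequentially"
    and "(\<lambda>n. inverse (F n)) \<longlonglongrightarrow> 0"
  shows "sphere_tendsto u None"
proof -
  have "eventually (\<lambda>n. inverse (F n) = case_option 0 inverse (u n)) sequentially"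
    using assms(1) by eventually_elim simp
  then have "(\<lambda>n. case_option 0 inverse (u n)) \<longlonglongrightarrow> 0"
    by (rule Lim_transform_eventually[OF assms(2)])
  with assms(1) show ?thesis
    unfolding sphere_tendsto_def by (auto elim: eventually_mono)
qed

lemma sphere_tendsto_unique:
  assumes "sphere_tendsto u (Some a)" "sphere_tendsto u w"
  shows "w = Some a"
proof (cases w)
  case None
  have ev: "eventually (\<lambda>n. u n \<noteq> None \<and> u n \<noteq> Some 0) sequentially"
    and lim: "(\<lambda>n. the (u n)) \<longlonglongrightarrow> a" "(\<lambda>n. case_option 0 inverse (u n)) \<longlonglongrightarrow> 0"
    using assms None by (auto simp: sphere_tendsto_def eventually_conj)
  have "eventually (\<lambda>n. the (u n) * case_option 0 inverse (u n) = 1) sequentially"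
    using ev by eventually_elim auto
  moreover have "(\<lambda>n. the (u n) * case_option 0 inverse (u n)) \<longlonglongrightarrow> a * 0"
    using lim by (rule tendsto_mult)
  ultimately have "(\<lambda>n. 1 :: complex) \<longlonglongrightarrow> 0"
    by (simp add: Lim_transform_eventually)
  then show ?thesis
    by (simp add: LIMSEQ_const_iff)
next
  case (Some b)
  then show ?thesis
    using assms by (auto simp: sphere_tendsto_def intro: LIMSEQ_unique)
qed

lemma sphere_tendsto_fcd:
  assumes cs: "cs \<longlonglongrightarrow> c" and ds: "ds \<longlonglongrightarrow> d"
    and u: "sphere_tendsto u w" and w: "w \<noteq> Some 0"
  shows "sphere_tendsto (\<lambda>n. fcd (cs n) (ds n) (u n)) (fcd c d w)"
proof (cases w)
  case None
  define v where "v = (\<lambda>n. case_option 0 inverse (u n))"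
  have ev: "eventually (\<lambda>n. u n \<noteq> Some 0) sequentially" and "v \<longlonglongrightarrow> 0"
    using u None by (simp_all add: sphere_tendsto_def v_def)
  have "eventually (\<lambda>n. fcd (cs n) (ds n) (u n) = Some (1 + cs n * v n + ds n * v n ^ 2)) sequentially"
    using ev by eventually_elim
      (auto simp: v_def fcd_def divide_inverse power_inverse split: option.split)
  moreover have "(\<lambda>n. 1 + cs n * v n + ds n * v n ^ 2) \<longlonglongrightarrow> 1 + c * 0 + d * 0 ^ 2"
    by (intro tendsto_intros cs ds \<open>v \<longlonglongrightarrow> 0\<close>)
  ultimately show ?thesis
    using None by (simp add: fcd_def sphere_tendsto_SomeI)
next
  case (Some a)
  then have "a \<noteq> 0"
    using w by simp
  have ev: "eventually (\<lambda>n. u n \<noteq> None) sequentially" and lim: "(\<lambda>n. the (u n)) \<longlonglongrightarrow> a"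
    using u Some by (simp_all add: sphere_tendsto_def)
  have "eventually (\<lambda>n. the (u n) \<noteq> 0) sequentially"
    using tendsto_imp_eventually_ne[OF lim \<open>a \<noteq> 0\<close>] .
  with ev have "eventually (\<lambda>n. fcd (cs n) (ds n) (u n) =
      Some (1 + cs n / the (u n) + ds n / the (u n) ^ 2)) sequentially"
    by eventually_elim (auto simp: fcd_def)
  moreover have "(\<lambda>n. 1 + cs n / the (u n) + ds n / the (u n) ^ 2) \<longlonglongrightarrow> 1 + c / a + d / a ^ 2"
    using \<open>a \<noteq> 0\<close> by (intro tendsto_intros cs ds lim) auto
  ultimately show ?thesis
    using Some \<open>a \<noteq> 0\<close> by (simp add: fcd_def sphere_tendsto_SomeI)
qed

lemma sphere_tendsto_fcd_iterate:
  assumes cs: "cs \<longlonglongrightarrow> c" and ds: "ds \<longlonglongrightarrow> d"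
    and first: "sphere_tendsto (\<lambda>n. fcd (cs n) (ds n) (s n)) (fcd c d w)"
    and k: "k \<ge> 1" and avoid: "\<And>i. 1 \<le> i \<Longrightarrow> i < k \<Longrightarrow> (fcd c d ^^ i) w \<noteq> Some 0"
  shows "sphere_tendsto (\<lambda>n. (fcd (cs n) (ds n) ^^ k) (s n)) ((fcd c d ^^ k) w)"
  using k
proof (induction k rule: dec_induct)
  case base
  show ?case
    using first by simp
next
  case (step i)
  then show ?case
    using sphere_tendsto_fcd[OF cs ds step.IH avoid[of i]] by simp
qed

lemma limit_orbit_hits_zero:
  assumes cs: "cs \<longlonglongrightarrow> c" and ds: "ds \<longlonglongrightarrow> d"
    and first: "sphere_tendsto (\<lambda>n. fcd (cs n) (ds n) (s n)) (fcd c d w)"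
    and last: "sphere_tendsto (\<lambda>n. (fcd (cs n) (ds n) ^^ j) (s n)) (Some 0)"
    and "j \<ge> 1"
  obtains i where "1 \<le> i" "i \<le> j" "(fcd c d ^^ i) w = Some 0"
proof (cases "\<exists>i. 1 \<le> i \<and> i < j \<and> (fcd c d ^^ i) w = Some 0")
  case True
  then show thesis
    using that by force
next
  case False
  then have "sphere_tendsto (\<lambda>n. (fcd (cs n) (ds n) ^^ j) (s n)) ((fcd c d ^^ j) w)"
    using sphere_tendsto_fcd_iterate[OF cs ds first \<open>j \<ge> 1\<close>] by blast
  then have "(fcd c d ^^ j) w = Some 0"
    using sphere_tendsto_unique[OF last] by blast
  then show thesis
    using that \<open>j \<ge> 1\<close> by blast
qed

lemma fcd_zero_iterate_origin:
  assumes "c \<noteq> 0"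
  shows "(fcd c 0 ^^ Suc m) (Some 0) =
    (if fibc c m = 0 then None else Some (fibc c (Suc m) / fibc c m))"
proof (induction m)
  case 0
  then show ?case
    by (simp add: fcd_def)
next
  case (Suc m)
  then show ?case
    using fibc_consecutive_nonzero[OF assms, of m] assms by (auto simp: fcd_def field_simps)
qed

lemma fcd_zero_orbit_returns_imp_fibc_zero:
  assumes "c \<noteq> 0" "i \<ge> 1" "(fcd c 0 ^^ i) (Some 0) = Some 0"
  shows "fibc c i = 0"
proof -
  obtain m where "i = Suc m"
    using assms(2) by (cases i) auto
  then show ?thesis
    using assms(3) fcd_zero_iterate_origin[OF assms(1), of m] by (auto split: if_splits)
qed

lemma fcd_crit:
  assumes "c \<noteq> 0" "d \<noteq> 0"
  shows "fcd c d (crit c d) = Some ((4 * d - c ^ 2) / (4 * d))"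
  using assms by (simp add: fcd_def crit_def field_simps power2_eq_square)

lemma closure_pair_sequential:
  fixes a :: "'a::first_countable_topology" and b :: "'b::first_countable_topology"
  assumes "(a, b) \<in> closure S"
  obtains xs ys where "\<And>n. (xs n, ys n) \<in> S" "xs \<longlonglongrightarrow> a" "ys \<longlonglongrightarrow> b"
proof -
  obtain z where "\<And>n. z n \<in> S" "z \<longlonglongrightarrow> (a, b)"
    using assms closure_sequential by blast
  then show thesis
    using that[of "\<lambda>n. fst (z n)" "\<lambda>n. snd (z n)"] tendsto_fst tendsto_snd by fastforce
qed

lemma closure_Pset_orbit_returns:
  assumes "(c, 0) \<in> closure (Pset j)" "c \<noteq> 0" "j \<ge> 1"
  obtains i where "1 \<le> i" "i \<le> j" "(fcd c 0 ^^ i) (Some 0) = Some 0"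
proof -
  obtain cs ds where P: "\<And>n. (cs n, ds n) \<in> Pset j" and cs: "cs \<longlonglongrightarrow> c" and ds: "ds \<longlonglongrightarrow> 0"
    using closure_pair_sequential[OF assms(1)] by blast
  have "sphere_tendsto (\<lambda>n. fcd (cs n) (ds n) (Some 0)) (fcd c 0 (Some 0))"
    by (simp add: fcd_def sphere_tendsto_def)
  moreover have "sphere_tendsto (\<lambda>n. (fcd (cs n) (ds n) ^^ j) (Some 0)) (Some 0)"
  proof (rule sphere_tendsto_SomeI)
    have orbit: "(fcd (cs n) (ds n) ^^ j) (Some 0) = crit (cs n) (ds n)" for n
      using P[of n] by (simp add: Pset_def)
    show "eventually (\<lambda>n. (fcd (cs n) (ds n) ^^ j) (Some 0) = Some (- 2 * ds n / cs n)) sequentially"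
      using tendsto_imp_eventually_ne[OF cs assms(2)] by eventually_elim (simp add: orbit crit_def)
    show "(\<lambda>n. - 2 * ds n / cs n) \<longlonglongrightarrow> 0"
      using tendsto_divide[OF tendsto_mult[OF tendsto_const ds] cs assms(2), of "- 2"] by simp
  qed
  ultimately show thesis
    by (rule limit_orbit_hits_zero[OF cs ds _ _ assms(3)]) (rule that)
qed

lemma closure_Qset_orbit_returns:
  assumes "(c, 0) \<in> closure (Qset j)" "c \<noteq> 0" "j \<ge> 1"
  obtains i where "1 \<le> i" "i \<le> j" "(fcd c 0 ^^ i) (Some 0) = Some 0"
proof -
  obtain cs ds where Q: "\<And>n. (cs n, ds n) \<in> Qset j" and cs: "cs \<longlonglongrightarrow> c" and ds: "ds \<longlonglongrightarrow> 0"
    using closure_pair_sequential[OF assms(1)] by blast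
  have d: "ds n \<noteq> 0" for n
    using Q[of n] by (simp add: Qset_def)
  have "sphere_tendsto (\<lambda>n. fcd (cs n) (ds n) (crit (cs n) (ds n))) (fcd c 0 (Some 0))"
  proof -
    have lim: "(\<lambda>n. 4 * ds n - cs n ^ 2) \<longlonglongrightarrow> 4 * 0 - c ^ 2"
      by (intro tendsto_intros cs ds)
    have lim_ne: "4 * 0 - c ^ 2 \<noteq> 0"
      using assms(2) by simp
    have "eventually (\<lambda>n. cs n \<noteq> 0 \<and> 4 * ds n - cs n ^ 2 \<noteq> 0) sequentially"
      using tendsto_imp_eventually_ne[OF cs assms(2)] tendsto_imp_eventually_ne[OF lim lim_ne]
      by (simp add: eventually_conj)
    then have "eventually (\<lambda>n. fcd (cs n) (ds n) (crit (cs n) (ds n)) =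
        Some ((4 * ds n - cs n ^ 2) / (4 * ds n)) \<and> (4 * ds n - cs n ^ 2) / (4 * ds n) \<noteq> 0) sequentially"
      by eventually_elim (simp add: fcd_crit d)
    moreover have "(\<lambda>n. inverse ((4 * ds n - cs n ^ 2) / (4 * ds n))) \<longlonglongrightarrow> 0"
      using tendsto_divide[OF tendsto_mult[OF tendsto_const ds] lim] assms(2) by simp
    ultimately have "sphere_tendsto (\<lambda>n. fcd (cs n) (ds n) (crit (cs n) (ds n))) None"
      by (rule sphere_tendsto_NoneI)
    then show ?thesis
      by (simp add: fcd_def)
  qed
  moreover have "sphere_tendsto (\<lambda>n. (fcd (cs n) (ds n) ^^ j) (crit (cs n) (ds n))) (Some 0)"
    using Q by (intro sphere_tendsto_SomeI[where F = "\<lambda>n. 0"]) (simp_all add: Qset_def)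
  ultimately show thesis
    by (rule limit_orbit_hits_zero[OF cs ds _ _ assms(3)]) (rule that)
qed

theorem lemma3p4:
  fixes c :: complex and j :: nat
  assumes "j \<ge> 1"
    and "(c, 0) \<in> closure (Pset j) \<union> closure (Qset j)"
  shows "c = 0 \<or> (\<exists>p q :: int. q \<ge> 3 \<and> gcd p q = 1 \<and>
           inverse c = complex_of_real (- 4 * (cos (pi * real_of_int p / real_of_int q))^2))"
proof (cases "c = 0")
  case False
  obtain i where "1 \<le> i" "i \<le> j" "(fcd c 0 ^^ i) (Some 0) = Some 0"
    using assms(2)
  proof
    assume "(c, 0) \<in> closure (Pset j)"
    then show thesis
      by (rule closure_Pset_orbit_returns[OF _ False assms(1)]) (rule that)
  next
    assume "(c, 0) \<in> closure (Qset j)"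
    then show thesis
      by (rule closure_Qset_orbit_returns[OF _ False assms(1)]) (rule that)
  qed
  then have "fibc c i = 0"
    using False by (intro fcd_zero_orbit_returns_imp_fibc_zero)
  obtain p q :: int where "q \<ge> 3" "gcd p q = 1"
      "inverse c = complex_of_real (- 4 * (cos (pi * p / q))^2)"
    using fibc_zero_imp_inverse_cos[OF False \<open>1 \<le> i\<close> \<open>fibc c i = 0\<close>] .
  then show ?thesis
    by (intro disjI2 exI conjI)
qed simp

end
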